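(* Let $s\le0$, $\sigma>0$, $\delta\in\mathbb{R}$. Suppose $u\in E^s_\sigma$ with $\operatorname{supp}\widehat u\subset\{\xi:\xi\ge\varepsilon_0\}$ for some $\varepsilon_0>0$. Then $\mathcal G(u)\in E^s_\sigma$ and there exists $C=C(\varepsilon_0,\delta,\sigma)>0$ such that $$\|\mathcal G(u)\|_{E^s_\sigma}\le\exp\big(C\|u\|_{E^s_\sigma}^2\big)\|u\|_{E^s_\sigma}.$$
   Context: $\langle\xi\rangle=(1+\xi^2)^{1/2}$; $E^s_\sigma$ is the space of $f$ in the dual of the Gelfand–Shilov space with $\|f\|_{E^s_\sigma}=\|\langle\xi\rangle^\sigma2^{s|\xi|}\widehat f\|_{L^2(\mathbb{R})}<\infty$. $u^*(x)=\overline{u(-x)}$. $\partial_x^{-1}f(x)=\frac12\big(\int_{-\infty}^xf(y)dy-\int_x^\infty f(y)dy\big)$. The gauge transform is $\mathcal G(u)=u\exp(-\delta\,\partial_x^{-1}(uu^* ))=u\sum_{k\ge0}\frac{(-\delta)^k}{k!}\big(\partial_x^{-1}(uu^* )\big)^k$. *)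

theory Defs
  imports "HOL-Analysis.Analysis"
begin

text \<open>Everything is expressed on the Fourier side: a tempered object u is represented
by its Fourier transform v = \<open>\<hat>u\<close> (convention \<open>\<hat>f(\<xi>) = \<integral> f(x) e^{-ix\<xi>} dx\<close>).\<close>

definition japanese :: "real \<Rightarrow> real" where
  "japanese \<xi> = sqrt (1 + \<xi>\<^sup>2)"

definition E_weight :: "real \<Rightarrow> real \<Rightarrow> real \<Rightarrow> real" where
  "E_weight s \<sigma> \<xi> = japanese \<xi> powr \<sigma> * 2 powr (s * \<bar>\<xi>\<bar>)"

definition in_E :: "real \<Rightarrow> real \<Rightarrow> (real \<Rightarrow> complex) \<Rightarrow> bool" where
  "in_E s \<sigma> v \<longleftrightarrow> v \<in> borel_measurable lborel \<and>
     integrable lborel (\<lambda>\<xi>. (E_weight s \<sigma> \<xi> * cmod (v \<xi>))\<^sup>2)"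

definition E_norm :: "real \<Rightarrow> real \<Rightarrow> (real \<Rightarrow> complex) \<Rightarrow> real" where
  "E_norm s \<sigma> v = sqrt (LINT \<xi>|lborel. (E_weight s \<sigma> \<xi> * cmod (v \<xi>))\<^sup>2)"

text \<open>Convolution; Fourier transform of a product: \<open>(fg)^ = (2\<pi>)^{-1} \<hat>f * \<hat>g\<close>.\<close>
definition conv :: "(real \<Rightarrow> complex) \<Rightarrow> (real \<Rightarrow> complex) \<Rightarrow> real \<Rightarrow> complex" where
  "conv f g \<xi> = (LINT \<eta>|lborel. f \<eta> * g (\<xi> - \<eta>))"

definition ft_mult :: "(real \<Rightarrow> complex) \<Rightarrow> (real \<Rightarrow> complex) \<Rightarrow> real \<Rightarrow> complex" where
  "ft_mult f g \<xi> = conv f g \<xi> / complex_of_real (2 * pi)"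

text \<open>Fourier transform of \<open>u^*(x) = conj (u(-x))\<close> is \<open>conj (\<hat>u(\<xi>))\<close>.\<close>
definition ft_star :: "(real \<Rightarrow> complex) \<Rightarrow> real \<Rightarrow> complex" where
  "ft_star v \<xi> = cnj (v \<xi>)"

text \<open>Fourier transform of \<open>\<partial>_x^{-1} f\<close> (symbol \<open>1/(i\<xi>)\<close>, principal value);
  only used for f whose Fourier transform vanishes near 0.\<close>
definition ft_antideriv :: "(real \<Rightarrow> complex) \<Rightarrow> real \<Rightarrow> complex" where
  "ft_antideriv f \<xi> = f \<xi> / (\<i> * complex_of_real \<xi>)"

text \<open>Fourier transform of \<open>u \<cdot> w^k\<close> given \<open>\<hat>u = v\<close>, \<open>\<hat>w = W\<close>.\<close>
fun ft_mult_pow :: "(real \<Rightarrow> complex) \<Rightarrow> (real \<Rightarrow> complex) \<Rightarrow> nat \<Rightarrow> real \<Rightarrow> complex" where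
  "ft_mult_pow v W 0 = v"
| "ft_mult_pow v W (Suc k) = ft_mult (ft_mult_pow v W k) W"

text \<open>Fourier transform of the gauge transform
  \<open>G(u) = u \<Sum>_k (-\<delta>)^k/k! (\<partial>_x^{-1}(u u^*))^k\<close>.\<close>
definition ft_gauge :: "real \<Rightarrow> (real \<Rightarrow> complex) \<Rightarrow> real \<Rightarrow> complex" where
  "ft_gauge \<delta> v \<xi> =
     (\<Sum>k. complex_of_real ((- \<delta>) ^ k / fact k) *
        ft_mult_pow v (ft_antideriv (ft_mult v (ft_star v))) k \<xi>)"

end

theory Submission
  imports Defs
begin

(* On the Fourier side G(u) is the series of (-\<delta>)^k/k! v W^k, where v is the transform of u,
   W that of \<partial>_x^{-1}(u u^* ), and products become convolutions.  Since v vanishes below \<epsilon>0,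
   W vanishes below 2 \<epsilon>0 and the k-th term below (2k + 1) \<epsilon>0, so at each frequency the
   series is a finite sum.  On the support of the convolution defining W(\<xi>) we have
   \<xi> = b + c with b, c > 0, so the symbol 1/\<xi> is 1/(b + c).
   Multiplication by W is therefore bounded on E^s_\<sigma> with norm at most c_\<sigma> |v|^2: on
   [0, \<infinity>)^3 the weight is submultiplicative up to 2^\<sigma> (Peetre), and the trilinear form with
   kernel 1/(b + c) is bounded on L^2 by Cauchy-Schwarz with the Schur weights
   sqrt(b/c)/(b + c), whose integral in either variable is a finite constant by scaling.
   The k-th term thus has norm at most |\<delta>|^k/k! (c_\<sigma> |v|^2)^k |v|, and the exponential
   series gives the bound. *)

section \<open>Schur test for the kernel \<open>1/(b + c)\<close>\<close>

definition schur_kernel :: "real \<Rightarrow> real \<Rightarrow> real" where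
  "schur_kernel y x = (if 0 < x \<and> 0 < y then sqrt (y / x) / (x + y) else 0)"

lemma schur_kernel_nonneg: "0 \<le> schur_kernel y x"
  by (simp add: schur_kernel_def)

lemma borel_measurable_schur_kernel[measurable]:
  assumes [measurable]: "f \<in> borel_measurable M" "g \<in> borel_measurable M"
  shows "(\<lambda>p. schur_kernel (f p) (g p)) \<in> borel_measurable M"
  unfolding schur_kernel_def by measurable

lemma schur_kernel_scale:
  assumes "0 < y"
  shows "schur_kernel y (y * x) = schur_kernel 1 x / y"
proof (cases "0 < x")
  case True
  have "sqrt (y / (y * x)) = sqrt (1 / x)" and "y * x + y = y * (x + 1)"
    using assms by (simp_all add: algebra_simps)
  then show ?thesis
    using True assms by (simp add: schur_kernel_def)
next
  case False
  then show ?thesis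
    using assms by (simp add: schur_kernel_def zero_less_mult_iff)
qed

lemma schur_kernel_1_le:
  "schur_kernel 1 x \<le> x powr (-1/2) * indicator {0..1} x + x powr (-3/2) * indicator {1..} x"
proof (cases "0 < x")
  case False
  then show ?thesis by (simp add: schur_kernel_def)
next
  case True
  have "sqrt (1 / x) = x powr (-1/2)"
    using True by (simp add: powr_minus_divide powr_half_sqrt real_sqrt_divide)
  then have K: "schur_kernel 1 x = x powr (-1/2) / (x + 1)"
    using True by (simp add: schur_kernel_def)
  have "x powr (-3/2) = x powr (-1/2) / x"
    using powr_diff[of x "-1/2" 1] True by simp
  then have "schur_kernel 1 x \<le> x powr (-1/2)" and "1 \<le> x \<Longrightarrow> schur_kernel 1 x \<le> x powr (-3/2)"
    using divide_left_mono[of 1 "x + 1" "x powr (-1/2)"] divide_left_mono[of x "x + 1" "x powr (-1/2)"] True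
    by (simp_all add: K)
  then show ?thesis
    using True by (auto simp: indicator_def intro: add_increasing2)
qed

lemma nn_integral_schur_kernel_1_finite: "(\<integral>\<^sup>+x. ennreal (schur_kernel 1 x) \<partial>lborel) < \<infinity>"
proof -
  have "((\<lambda>x. x powr (-1/2)) has_integral 2) {0..1::real}"
    using has_integral_powr_from_0[of "-1/2" 1] by simp
  then have small: "(\<integral>\<^sup>+x. ennreal (x powr (-1/2)) * indicator {0..1} x \<partial>lborel) = 2"
    by (subst nn_integral_has_integral_lebesgue') auto
  have "((\<lambda>x. x powr (-3/2)) has_integral 2) {1::real..}"
    using has_integral_powr_to_inf[of "-3/2" 1] by simp
  then have large: "(\<integral>\<^sup>+x. ennreal (x powr (-3/2)) * indicator {1..} x \<partial>lborel) = 2"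
    by (subst nn_integral_has_integral_lebesgue') auto
  have "(\<integral>\<^sup>+x. ennreal (schur_kernel 1 x) \<partial>lborel)
      \<le> (\<integral>\<^sup>+x. ennreal (x powr (-1/2)) * indicator {0..1} x + ennreal (x powr (-3/2)) * indicator {1..} x \<partial>lborel)"
  proof (intro nn_integral_mono)
    fix x :: real
    show "ennreal (schur_kernel 1 x)
        \<le> ennreal (x powr (-1/2)) * indicator {0..1} x + ennreal (x powr (-3/2)) * indicator {1..} x"
      using schur_kernel_1_le[of x]
      by (auto split: split_indicator simp: ennreal_neg simp flip: ennreal_plus intro!: ennreal_leI)
  qed
  also have "\<dots> = (\<integral>\<^sup>+x. ennreal (x powr (-1/2)) * indicator {0..1} x \<partial>lborel)
      + (\<integral>\<^sup>+x. ennreal (x powr (-3/2)) * indicator {1..} x \<partial>lborel)"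
    by (rule nn_integral_add) auto
  also have "\<dots> = 4"
    unfolding small large by simp
  finally show ?thesis
    by (simp add: le_less_trans)
qed

definition schur_const :: real where
  "schur_const = enn2real (\<integral>\<^sup>+x. ennreal (schur_kernel 1 x) \<partial>lborel)"

lemma nn_integral_schur_kernel_1: "(\<integral>\<^sup>+x. ennreal (schur_kernel 1 x) \<partial>lborel) = ennreal schur_const"
  using nn_integral_schur_kernel_1_finite by (simp add: schur_const_def)

lemma nn_integral_schur_kernel_le: "(\<integral>\<^sup>+x. ennreal (schur_kernel y x) \<partial>lborel) \<le> ennreal schur_const"
proof (cases "0 < y")
  case False
  then show ?thesis by (simp add: schur_kernel_def)
next
  case True
  have "(\<integral>\<^sup>+x. ennreal (schur_kernel y x) \<partial>lborel)
      = ennreal y * (\<integral>\<^sup>+x. ennreal (schur_kernel y (0 + y * x)) \<partial>lborel)"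
    using nn_integral_real_affine[of "\<lambda>x. ennreal (schur_kernel y x)" y 0] True by simp
  also have "\<dots> = ennreal y * (\<integral>\<^sup>+x. ennreal (schur_kernel 1 x) * ennreal (1 / y) \<partial>lborel)"
    using True by (simp add: schur_kernel_scale schur_kernel_nonneg flip: ennreal_mult')
  also have "(\<integral>\<^sup>+x. ennreal (schur_kernel 1 x) * ennreal (1 / y) \<partial>lborel) = ennreal schur_const * ennreal (1 / y)"
    unfolding nn_integral_schur_kernel_1[symmetric] by (rule nn_integral_multc) measurable
  also have "ennreal y * (ennreal schur_const * ennreal (1 / y)) = ennreal schur_const * (ennreal y * ennreal (1 / y))"
    by (rule mult.left_commute)
  also have "ennreal y * ennreal (1 / y) = 1"
    using True by (simp flip: ennreal_mult)
  finally show ?thesis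
    by simp
qed

lemma schur_const_pos: "0 < schur_const"
proof -
  have "ennreal (1/2) = (\<integral>\<^sup>+x. ennreal (1/2) * indicator {0<..1::real} x \<partial>lborel)"
    by (simp add: nn_integral_cmult_indicator)
  also have "\<dots> \<le> (\<integral>\<^sup>+x. ennreal (schur_kernel 1 x) \<partial>lborel)"
  proof (intro nn_integral_mono)
    fix x :: real
    show "ennreal (1/2) * indicator {0<..1} x \<le> ennreal (schur_kernel 1 x)"
    proof (cases "0 < x \<and> x \<le> 1")
      case True
      then have "1 \<le> sqrt (1 / x)" by simp
      then have "1 + x \<le> 2 * sqrt (1 / x)"
        using True by linarith
      then have "1 / 2 \<le> sqrt (1 / x) / (x + 1)"
        using True by (simp add: field_simps)
      then have "ennreal (1 / 2) \<le> ennreal (schur_kernel 1 x)"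
        using True by (intro ennreal_leI) (simp add: schur_kernel_def)
      then show ?thesis
        using True by (simp add: indicator_def)
    qed (auto simp: indicator_def)
  qed
  finally have "ennreal (1/2) \<le> ennreal schur_const"
    unfolding nn_integral_schur_kernel_1 .
  moreover have "0 \<le> schur_const"
    by (simp add: schur_const_def)
  ultimately have "1/2 \<le> schur_const"
    by (simp only: ennreal_le_iff)
  then show ?thesis
    by simp
qed

definition recip_sum :: "real \<Rightarrow> real \<Rightarrow> real" where
  "recip_sum b c = (if 0 < b \<and> 0 < c then 1 / (b + c) else 0)"

lemma recip_sum_nonneg: "0 \<le> recip_sum b c"
  by (simp add: recip_sum_def)

lemma borel_measurable_recip_sum[measurable]:
  assumes [measurable]: "f \<in> borel_measurable M" "g \<in> borel_measurable M"
  shows "(\<lambda>p. recip_sum (f p) (g p)) \<in> borel_measurable M"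
  unfolding recip_sum_def by measurable

lemma sqrt_schur_kernel_mult_swap:
  "ennreal (sqrt (schur_kernel b c)) * ennreal (sqrt (schur_kernel c b)) = ennreal (recip_sum b c)"
proof -
  have "sqrt (schur_kernel b c) * sqrt (schur_kernel c b) = recip_sum b c"
  proof (cases "0 < b \<and> 0 < c")
    case True
    then have "schur_kernel b c * schur_kernel c b = (1 / (b + c))\<^sup>2"
      by (simp add: schur_kernel_def real_sqrt_mult[symmetric] power2_eq_square field_simps)
    then show ?thesis
      using True by (simp add: recip_sum_def real_sqrt_mult[symmetric])
  next
    case False
    then show ?thesis
      by (auto simp: schur_kernel_def recip_sum_def)
  qed
  then show ?thesis
    by (simp add: schur_kernel_nonneg flip: ennreal_mult)
qed

lemma nn_integral_lborel_reflect:
  fixes h :: "real \<Rightarrow> ennreal"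
  assumes [measurable]: "h \<in> borel_measurable borel"
  shows "(\<integral>\<^sup>+a. h (t - a) \<partial>lborel) = (\<integral>\<^sup>+x. h x \<partial>lborel)"
  using nn_integral_real_affine[of h "-1" t] by simp

lemma nn_integral_lborel_translate:
  fixes h :: "real \<Rightarrow> ennreal"
  assumes [measurable]: "h \<in> borel_measurable borel"
  shows "(\<integral>\<^sup>+a. h (a - t) \<partial>lborel) = (\<integral>\<^sup>+x. h x \<partial>lborel)"
  using nn_integral_real_affine[of h 1 "-t"] by simp

definition recip_sum_trilinear :: "(real \<Rightarrow> ennreal) \<Rightarrow> (real \<Rightarrow> ennreal) \<Rightarrow> real \<Rightarrow> ennreal" where
  "recip_sum_trilinear G V \<xi> =
     (\<integral>\<^sup>+a. \<integral>\<^sup>+b. G a * V b * V (\<xi> - a - b) * ennreal (recip_sum b (\<xi> - a - b)) \<partial>lborel \<partial>lborel)"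

lemma borel_measurable_recip_sum_trilinear[measurable]:
  assumes [measurable]: "G \<in> borel_measurable borel" "V \<in> borel_measurable borel"
  shows "recip_sum_trilinear G V \<in> borel_measurable borel"
  unfolding recip_sum_trilinear_def[abs_def] by measurable

lemma recip_sum_trilinear_sq_le:
  fixes G V :: "real \<Rightarrow> ennreal"
  assumes [measurable]: "G \<in> borel_measurable borel" "V \<in> borel_measurable borel"
  shows "(recip_sum_trilinear G V \<xi>)\<^sup>2
    \<le> (\<integral>\<^sup>+a. \<integral>\<^sup>+b. G a ^ 2 * V b ^ 2 * ennreal (schur_kernel b (\<xi> - a - b)) \<partial>lborel \<partial>lborel)
      * (\<integral>\<^sup>+a. \<integral>\<^sup>+b. V (\<xi> - a - b) ^ 2 * ennreal (schur_kernel (\<xi> - a - b) b) \<partial>lborel \<partial>lborel)"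
proof -
  define X where "X = (\<lambda>(a, b). G a * V b * ennreal (sqrt (schur_kernel b (\<xi> - a - b))))"
  define Y where "Y = (\<lambda>(a, b). V (\<xi> - a - b) * ennreal (sqrt (schur_kernel (\<xi> - a - b) b)))"
  have [measurable]: "X \<in> borel_measurable (lborel \<Otimes>\<^sub>M lborel)" "Y \<in> borel_measurable (lborel \<Otimes>\<^sub>M lborel)"
    unfolding X_def Y_def by measurable
  have "recip_sum_trilinear G V \<xi> = (\<integral>\<^sup>+a. \<integral>\<^sup>+b. X (a, b) * Y (a, b) \<partial>lborel \<partial>lborel)"
    unfolding recip_sum_trilinear_def X_def Y_def
    by (simp add: mult_ac flip: sqrt_schur_kernel_mult_swap)
  also have "\<dots> = (\<integral>\<^sup>+p. X p * Y p \<partial>(lborel \<Otimes>\<^sub>M lborel))"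
    by (rule lborel.nn_integral_fst[where f = "\<lambda>p. X p * Y p"]) measurable
  finally have "(recip_sum_trilinear G V \<xi>)\<^sup>2
      \<le> (\<integral>\<^sup>+p. X p ^ 2 \<partial>(lborel \<Otimes>\<^sub>M lborel)) * (\<integral>\<^sup>+p. Y p ^ 2 \<partial>(lborel \<Otimes>\<^sub>M lborel))"
    using Cauchy_Schwarz_nn_integral[of X _ Y] by simp
  also have "(\<integral>\<^sup>+p. X p ^ 2 \<partial>(lborel \<Otimes>\<^sub>M lborel))
      = (\<integral>\<^sup>+a. \<integral>\<^sup>+b. G a ^ 2 * V b ^ 2 * ennreal (schur_kernel b (\<xi> - a - b)) \<partial>lborel \<partial>lborel)"
    unfolding X_def
    by (subst lborel.nn_integral_fst[symmetric]) (measurable, simp add: power_mult_distrib schur_kernel_nonneg ennreal_power)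
  also have "(\<integral>\<^sup>+p. Y p ^ 2 \<partial>(lborel \<Otimes>\<^sub>M lborel))
      = (\<integral>\<^sup>+a. \<integral>\<^sup>+b. V (\<xi> - a - b) ^ 2 * ennreal (schur_kernel (\<xi> - a - b) b) \<partial>lborel \<partial>lborel)"
    unfolding Y_def
    by (subst lborel.nn_integral_fst[symmetric]) (measurable, simp add: power_mult_distrib schur_kernel_nonneg ennreal_power)
  finally show ?thesis .
qed

lemma nn_integral_schur_kernel_reflect_le:
  fixes V :: "real \<Rightarrow> ennreal"
  assumes [measurable]: "V \<in> borel_measurable borel"
  shows "(\<integral>\<^sup>+a. \<integral>\<^sup>+b. V (\<xi> - a - b) ^ 2 * ennreal (schur_kernel (\<xi> - a - b) b) \<partial>lborel \<partial>lborel)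
     \<le> ennreal schur_const * (\<integral>\<^sup>+c. V c ^ 2 \<partial>lborel)"
proof -
  have "(\<integral>\<^sup>+a. \<integral>\<^sup>+b. V (\<xi> - a - b) ^ 2 * ennreal (schur_kernel (\<xi> - a - b) b) \<partial>lborel \<partial>lborel)
     = (\<integral>\<^sup>+b. \<integral>\<^sup>+a. V (\<xi> - b - a) ^ 2 * ennreal (schur_kernel (\<xi> - b - a) b) \<partial>lborel \<partial>lborel)"
    by (subst lborel_pair.Fubini') (measurable, simp add: algebra_simps)
  also have "\<dots> = (\<integral>\<^sup>+b. \<integral>\<^sup>+c. V c ^ 2 * ennreal (schur_kernel c b) \<partial>lborel \<partial>lborel)"
    by (intro nn_integral_cong nn_integral_lborel_reflect) measurable
  also have "\<dots> = (\<integral>\<^sup>+c. V c ^ 2 * (\<integral>\<^sup>+b. ennreal (schur_kernel c b) \<partial>lborel) \<partial>lborel)"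
    by (subst lborel_pair.Fubini') (measurable, intro nn_integral_cong nn_integral_cmult, measurable)
  also have "\<dots> \<le> (\<integral>\<^sup>+c. V c ^ 2 * ennreal schur_const \<partial>lborel)"
    by (intro nn_integral_mono mult_left_mono nn_integral_schur_kernel_le) auto
  also have "\<dots> = ennreal schur_const * (\<integral>\<^sup>+c. V c ^ 2 \<partial>lborel)"
    by (subst nn_integral_multc) (measurable, simp add: mult_ac)
  finally show ?thesis .
qed

lemma nn_integral_schur_kernel_translate_le:
  fixes G V :: "real \<Rightarrow> ennreal"
  assumes [measurable]: "G \<in> borel_measurable borel" "V \<in> borel_measurable borel"
  shows "(\<integral>\<^sup>+\<xi>. \<integral>\<^sup>+a. \<integral>\<^sup>+b. G a ^ 2 * V b ^ 2 * ennreal (schur_kernel b (\<xi> - a - b)) \<partial>lborel \<partial>lborel \<partial>lborel)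
     \<le> ennreal schur_const * (\<integral>\<^sup>+a. G a ^ 2 \<partial>lborel) * (\<integral>\<^sup>+b. V b ^ 2 \<partial>lborel)"
proof -
  have "(\<integral>\<^sup>+\<xi>. \<integral>\<^sup>+a. \<integral>\<^sup>+b. G a ^ 2 * V b ^ 2 * ennreal (schur_kernel b (\<xi> - a - b)) \<partial>lborel \<partial>lborel \<partial>lborel)
     = (\<integral>\<^sup>+a. \<integral>\<^sup>+\<xi>. \<integral>\<^sup>+b. G a ^ 2 * V b ^ 2 * ennreal (schur_kernel b (\<xi> - a - b)) \<partial>lborel \<partial>lborel \<partial>lborel)"
    by (rule lborel_pair.Fubini') measurable
  also have "\<dots> = (\<integral>\<^sup>+a. \<integral>\<^sup>+b. \<integral>\<^sup>+\<xi>. G a ^ 2 * V b ^ 2 * ennreal (schur_kernel b (\<xi> - a - b)) \<partial>lborel \<partial>lborel \<partial>lborel)"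
    by (intro nn_integral_cong lborel_pair.Fubini') measurable
  also have "\<dots> = (\<integral>\<^sup>+a. \<integral>\<^sup>+b. G a ^ 2 * V b ^ 2 * (\<integral>\<^sup>+\<xi>. ennreal (schur_kernel b (\<xi> - a - b)) \<partial>lborel) \<partial>lborel \<partial>lborel)"
    by (intro nn_integral_cong nn_integral_cmult) measurable
  also have "\<dots> \<le> (\<integral>\<^sup>+a. \<integral>\<^sup>+b. G a ^ 2 * V b ^ 2 * ennreal schur_const \<partial>lborel \<partial>lborel)"
  proof (intro nn_integral_mono mult_left_mono)
    fix a b
    show "(\<integral>\<^sup>+\<xi>. ennreal (schur_kernel b (\<xi> - a - b)) \<partial>lborel) \<le> ennreal schur_const"
      using nn_integral_lborel_translate[of "\<lambda>x. ennreal (schur_kernel b x)" "a + b"]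
        nn_integral_schur_kernel_le[of b]
      by (simp add: diff_diff_eq)
  qed auto
  also have "\<dots> = ennreal schur_const * (\<integral>\<^sup>+a. G a ^ 2 \<partial>lborel) * (\<integral>\<^sup>+b. V b ^ 2 \<partial>lborel)"
    by (simp add: nn_integral_cmult nn_integral_multc mult_ac)
  finally show ?thesis .
qed

lemma nn_integral_recip_sum_trilinear_sq_le:
  fixes G V :: "real \<Rightarrow> ennreal"
  assumes [measurable]: "G \<in> borel_measurable borel" "V \<in> borel_measurable borel"
  shows "(\<integral>\<^sup>+\<xi>. (recip_sum_trilinear G V \<xi>)\<^sup>2 \<partial>lborel)
    \<le> ennreal (schur_const\<^sup>2) * (\<integral>\<^sup>+a. G a ^ 2 \<partial>lborel) * (\<integral>\<^sup>+b. V b ^ 2 \<partial>lborel)\<^sup>2"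
proof -
  let ?A = "\<lambda>\<xi>. \<integral>\<^sup>+a. \<integral>\<^sup>+b. G a ^ 2 * V b ^ 2 * ennreal (schur_kernel b (\<xi> - a - b)) \<partial>lborel \<partial>lborel"
  let ?V = "\<integral>\<^sup>+b. V b ^ 2 \<partial>lborel"
  have "(\<integral>\<^sup>+\<xi>. (recip_sum_trilinear G V \<xi>)\<^sup>2 \<partial>lborel) \<le> (\<integral>\<^sup>+\<xi>. ?A \<xi> * (ennreal schur_const * ?V) \<partial>lborel)"
    by (intro nn_integral_mono order_trans[OF recip_sum_trilinear_sq_le] mult_left_mono
        nn_integral_schur_kernel_reflect_le) auto
  also have "\<dots> = (\<integral>\<^sup>+\<xi>. ?A \<xi> \<partial>lborel) * (ennreal schur_const * ?V)"
    by (rule nn_integral_multc) measurable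
  also have "\<dots> \<le> (ennreal schur_const * (\<integral>\<^sup>+a. G a ^ 2 \<partial>lborel) * ?V) * (ennreal schur_const * ?V)"
    by (intro mult_right_mono nn_integral_schur_kernel_translate_le) auto
  also have "\<dots> = ennreal (schur_const\<^sup>2) * (\<integral>\<^sup>+a. G a ^ 2 \<partial>lborel) * ?V\<^sup>2"
    using schur_const_pos by (simp add: power2_eq_square ennreal_mult mult_ac)
  finally show ?thesis .
qed

section \<open>The weight\<close>

lemma japanese_pos: "0 < japanese x"
  by (simp add: japanese_def add_pos_nonneg)

lemma japanese_add_le: "japanese (x + y) \<le> sqrt 2 * japanese x * japanese y"
proof -
  have "2 * x * y \<le> x\<^sup>2 + y\<^sup>2"
    using sum_squares_bound[of x y] by simp
  moreover have "0 \<le> x\<^sup>2 * y\<^sup>2"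
    by simp
  ultimately have "1 + (x + y)\<^sup>2 \<le> 2 * (1 + x\<^sup>2) * (1 + y\<^sup>2)"
    by (simp add: power2_eq_square algebra_simps)
  then have "sqrt (1 + (x + y)\<^sup>2) \<le> sqrt 2 * sqrt (1 + x\<^sup>2) * sqrt (1 + y\<^sup>2)"
    by (metis real_sqrt_le_mono real_sqrt_mult)
  then show ?thesis
    by (simp add: japanese_def)
qed

lemma E_weight_nonneg: "0 \<le> E_weight s \<sigma> x"
  by (simp add: E_weight_def)

lemma borel_measurable_E_weight[measurable]: "E_weight s \<sigma> \<in> borel_measurable borel"
  unfolding E_weight_def[abs_def] japanese_def by measurable

lemma E_weight_add3_le:
  assumes "0 \<le> \<sigma>" "0 \<le> a" "0 \<le> b" "0 \<le> c"
  shows "E_weight s \<sigma> (a + b + c) \<le> 2 powr \<sigma> * E_weight s \<sigma> a * E_weight s \<sigma> b * E_weight s \<sigma> c"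
proof -
  have "japanese (a + (b + c)) \<le> sqrt 2 * japanese a * japanese (b + c)"
    by (rule japanese_add_le)
  also have "\<dots> \<le> sqrt 2 * japanese a * (sqrt 2 * japanese b * japanese c)"
    using japanese_pos[of a] by (intro mult_left_mono japanese_add_le) auto
  finally have "japanese (a + b + c) \<le> 2 * japanese a * japanese b * japanese c"
    by (simp add: add.assoc mult_ac)
  then have "japanese (a + b + c) powr \<sigma> \<le> 2 powr \<sigma> * japanese a powr \<sigma> * japanese b powr \<sigma> * japanese c powr \<sigma>"
    using assms(1) japanese_pos[of "a + b + c"] japanese_pos[of a] japanese_pos[of b] japanese_pos[of c]
    by (metis powr_mono2 powr_mult less_imp_le)
  moreover have "(2::real) powr (s * \<bar>a + b + c\<bar>) = 2 powr (s * \<bar>a\<bar>) * 2 powr (s * \<bar>b\<bar>) * 2 powr (s * \<bar>c\<bar>)"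
    using assms by (simp add: powr_add[symmetric] algebra_simps)
  ultimately show ?thesis
    unfolding E_weight_def by (simp add: mult_right_mono mult_ac)
qed

section \<open>Multiplication by the phase\<close>

lemma borel_measurable_cnj[measurable]:
  assumes "f \<in> borel_measurable M"
  shows "(\<lambda>x. cnj (f x)) \<in> borel_measurable M"
  using borel_measurable_continuous_onI[OF continuous_on_cnj[OF continuous_on_id]] assms
  by (rule measurable_compose[rotated])

lemma borel_measurable_conv[measurable]:
  assumes [measurable]: "f \<in> borel_measurable borel" "g \<in> borel_measurable borel"
  shows "conv f g \<in> borel_measurable borel"
  unfolding conv_def by measurable

lemma borel_measurable_ft_mult[measurable]:
  assumes [measurable]: "f \<in> borel_measurable borel" "g \<in> borel_measurable borel"
  shows "ft_mult f g \<in> borel_measurable borel"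
  unfolding ft_mult_def by measurable

definition ft_phase :: "(real \<Rightarrow> complex) \<Rightarrow> real \<Rightarrow> complex" where
  "ft_phase v = ft_antideriv (ft_mult v (ft_star v))"

lemma borel_measurable_ft_phase[measurable]:
  assumes [measurable]: "v \<in> borel_measurable borel"
  shows "ft_phase v \<in> borel_measurable borel"
  unfolding ft_phase_def ft_antideriv_def ft_star_def by measurable

lemma norm_conv_le:
  "ennreal (cmod (conv f g \<xi>)) \<le> (\<integral>\<^sup>+\<eta>. ennreal (cmod (f \<eta>) * cmod (g (\<xi> - \<eta>))) \<partial>lborel)"
proof (cases "integrable lborel (\<lambda>\<eta>. f \<eta> * g (\<xi> - \<eta>))")
  case True
  then show ?thesis
    unfolding conv_def using integral_norm_bound_ennreal[OF True] by (simp add: norm_mult)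
next
  case False
  then show ?thesis
    unfolding conv_def by (simp add: not_integrable_integral_eq)
qed

lemma ft_mult_eq_0_below:
  assumes "\<And>x. x < \<alpha> \<Longrightarrow> f x = 0" "\<And>x. x < \<beta> \<Longrightarrow> g x = 0" "\<xi> < \<alpha> + \<beta>"
  shows "ft_mult f g \<xi> = 0"
proof -
  have "(\<lambda>\<eta>. f \<eta> * g (\<xi> - \<eta>)) = (\<lambda>_. 0)"
    using assms by (force intro!: ext)
  then show ?thesis
    by (simp add: ft_mult_def conv_def)
qed

lemma ft_phase_eq_0_below:
  assumes "\<And>x. x < \<epsilon> \<Longrightarrow> v x = 0" "t < 2 * \<epsilon>"
  shows "ft_phase v t = 0"
  using ft_mult_eq_0_below[of \<epsilon> v \<epsilon> "ft_star v" t] assms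
  by (simp add: ft_phase_def ft_antideriv_def ft_star_def)

lemma norm_ft_phase_le:
  assumes v_pos: "\<And>x. x \<le> 0 \<Longrightarrow> v x = 0" and [measurable]: "v \<in> borel_measurable borel"
  shows "ennreal (cmod (ft_phase v t))
    \<le> ennreal (1 / (2 * pi)) * (\<integral>\<^sup>+b. ennreal (cmod (v b) * cmod (v (t - b)) * recip_sum b (t - b)) \<partial>lborel)"
proof -
  have symbol: "cmod (v b) * cmod (v (t - b)) / \<bar>t\<bar> = cmod (v b) * cmod (v (t - b)) * recip_sum b (t - b)" for b
  proof (cases "v b = 0 \<or> v (t - b) = 0")
    case False
    then have "0 < b" "0 < t - b"
      using v_pos by (auto simp: not_le[symmetric])
    then show ?thesis
      by (simp add: recip_sum_def divide_inverse)
  qed auto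
  have "ennreal (cmod (ft_phase v t)) = ennreal (cmod (conv v (ft_star v) t)) * ennreal (1 / (2 * pi * \<bar>t\<bar>))"
    by (simp add: ft_phase_def ft_antideriv_def ft_mult_def norm_divide norm_mult flip: ennreal_mult)
  also have "\<dots> \<le> (\<integral>\<^sup>+b. ennreal (cmod (v b) * cmod (v (t - b))) \<partial>lborel) * ennreal (1 / (2 * pi * \<bar>t\<bar>))"
    using norm_conv_le[of v "ft_star v" t] by (intro mult_right_mono) (simp_all add: ft_star_def)
  also have "\<dots> = (\<integral>\<^sup>+b. ennreal (1 / (2 * pi)) * ennreal (cmod (v b) * cmod (v (t - b)) * recip_sum b (t - b)) \<partial>lborel)"
    by (subst nn_integral_multc[symmetric]) (measurable, intro nn_integral_cong, simp add: symbol[symmetric] flip: ennreal_mult)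
  also have "\<dots> = ennreal (1 / (2 * pi)) * (\<integral>\<^sup>+b. ennreal (cmod (v b) * cmod (v (t - b)) * recip_sum b (t - b)) \<partial>lborel)"
    by (rule nn_integral_cmult) measurable
  finally show ?thesis .
qed

lemma phase_integrand_weight_le:
  assumes "0 \<le> \<sigma>" and g_pos: "\<And>x. x < 0 \<Longrightarrow> g x = 0" and v_pos: "\<And>x. x \<le> 0 \<Longrightarrow> v x = 0"
  shows "ennreal (E_weight s \<sigma> \<xi> / (4 * pi\<^sup>2) * (cmod (g a) * cmod (v b) * cmod (v (\<xi> - a - b)) * recip_sum b (\<xi> - a - b)))
    \<le> ennreal (2 powr \<sigma> / (4 * pi\<^sup>2)) *
      (ennreal (E_weight s \<sigma> a * cmod (g a)) * ennreal (E_weight s \<sigma> b * cmod (v b))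
        * ennreal (E_weight s \<sigma> (\<xi> - a - b) * cmod (v (\<xi> - a - b))) * ennreal (recip_sum b (\<xi> - a - b)))"
proof -
  let ?w = "E_weight s \<sigma>" and ?c = "\<xi> - a - b"
  let ?P = "cmod (g a) * cmod (v b) * cmod (v ?c) * recip_sum b ?c"
  have "?w \<xi> * ?P \<le> 2 powr \<sigma> * ((?w a * cmod (g a)) * (?w b * cmod (v b)) * (?w ?c * cmod (v ?c)) * recip_sum b ?c)"
  proof (cases "g a = 0 \<or> v b = 0 \<or> v ?c = 0")
    case True
    have "0 \<le> 2 powr \<sigma> * ((?w a * cmod (g a)) * (?w b * cmod (v b)) * (?w ?c * cmod (v ?c)) * recip_sum b ?c)"
      by (intro mult_nonneg_nonneg) (simp_all add: E_weight_nonneg recip_sum_nonneg)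
    with True show ?thesis
      by auto
  next
    case False
    then have "\<not> a < 0" "\<not> b \<le> 0" "\<not> ?c \<le> 0"
      using g_pos v_pos by blast+
    then have "?w \<xi> \<le> 2 powr \<sigma> * ?w a * ?w b * ?w ?c"
      using E_weight_add3_le[OF \<open>0 \<le> \<sigma>\<close>, of a b ?c s] by simp
    then have "?w \<xi> * ?P \<le> (2 powr \<sigma> * ?w a * ?w b * ?w ?c) * ?P"
      by (intro mult_right_mono) (simp_all add: recip_sum_nonneg)
    then show ?thesis
      by (simp only: mult_ac)
  qed
  then have "?w \<xi> * ?P / (4 * pi\<^sup>2)
      \<le> 2 powr \<sigma> * ((?w a * cmod (g a)) * (?w b * cmod (v b)) * (?w ?c * cmod (v ?c)) * recip_sum b ?c) / (4 * pi\<^sup>2)"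
    by (rule divide_right_mono) simp
  then show ?thesis
    by (simp add: ennreal_leI E_weight_nonneg recip_sum_nonneg flip: ennreal_mult)
qed

lemma weighted_norm_ft_mult_phase_le:
  assumes "0 \<le> \<sigma>" and g_pos: "\<And>x. x < 0 \<Longrightarrow> g x = 0" and v_pos: "\<And>x. x \<le> 0 \<Longrightarrow> v x = 0"
    and [measurable]: "g \<in> borel_measurable borel" "v \<in> borel_measurable borel"
  shows "ennreal (E_weight s \<sigma> \<xi> * cmod (ft_mult g (ft_phase v) \<xi>))
    \<le> ennreal (2 powr \<sigma> / (4 * pi\<^sup>2)) *
      recip_sum_trilinear (\<lambda>a. ennreal (E_weight s \<sigma> a * cmod (g a))) (\<lambda>b. ennreal (E_weight s \<sigma> b * cmod (v b))) \<xi>"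
proof -
  let ?w = "E_weight s \<sigma>"
  have "ennreal (?w \<xi> * cmod (ft_mult g (ft_phase v) \<xi>)) = ennreal (?w \<xi> / (2 * pi)) * ennreal (cmod (conv g (ft_phase v) \<xi>))"
    by (simp add: ft_mult_def norm_divide E_weight_nonneg flip: ennreal_mult)
  also have "\<dots> \<le> ennreal (?w \<xi> / (2 * pi)) * (\<integral>\<^sup>+a. ennreal (cmod (g a)) * ennreal (cmod (ft_phase v (\<xi> - a))) \<partial>lborel)"
    using norm_conv_le[of g "ft_phase v" \<xi>] by (intro mult_left_mono) (simp_all add: ennreal_mult)
  also have "\<dots> \<le> ennreal (?w \<xi> / (2 * pi)) * (\<integral>\<^sup>+a. ennreal (cmod (g a)) * (ennreal (1 / (2 * pi)) *
      (\<integral>\<^sup>+b. ennreal (cmod (v b) * cmod (v (\<xi> - a - b)) * recip_sum b (\<xi> - a - b)) \<partial>lborel)) \<partial>lborel)"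
    using v_pos by (intro mult_left_mono nn_integral_mono norm_ft_phase_le) auto
  also have "\<dots> = (\<integral>\<^sup>+a. \<integral>\<^sup>+b. ennreal (?w \<xi> / (4 * pi\<^sup>2) *
      (cmod (g a) * cmod (v b) * cmod (v (\<xi> - a - b)) * recip_sum b (\<xi> - a - b))) \<partial>lborel \<partial>lborel)"
    by (simp add: nn_integral_cmult[symmetric] E_weight_nonneg recip_sum_nonneg power2_eq_square mult_ac
        flip: ennreal_mult)
  also have "\<dots> \<le> (\<integral>\<^sup>+a. \<integral>\<^sup>+b. ennreal (2 powr \<sigma> / (4 * pi\<^sup>2)) *
      (ennreal (?w a * cmod (g a)) * ennreal (?w b * cmod (v b)) * ennreal (?w (\<xi> - a - b) * cmod (v (\<xi> - a - b)))
        * ennreal (recip_sum b (\<xi> - a - b))) \<partial>lborel \<partial>lborel)"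
    using phase_integrand_weight_le[OF assms(1-3)] by (intro nn_integral_mono)
  also have "\<dots> = ennreal (2 powr \<sigma> / (4 * pi\<^sup>2)) *
      recip_sum_trilinear (\<lambda>a. ennreal (?w a * cmod (g a))) (\<lambda>b. ennreal (?w b * cmod (v b))) \<xi>"
    unfolding recip_sum_trilinear_def
    by (subst nn_integral_cmult[symmetric], measurable, intro nn_integral_cong nn_integral_cmult, measurable)
  finally show ?thesis .
qed

definition E_sqnorm :: "real \<Rightarrow> real \<Rightarrow> (real \<Rightarrow> complex) \<Rightarrow> ennreal" where
  "E_sqnorm s \<sigma> g = (\<integral>\<^sup>+\<xi>. ennreal (E_weight s \<sigma> \<xi> * cmod (g \<xi>)) ^ 2 \<partial>lborel)"

lemma in_E_iff_E_sqnorm: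
  "g \<in> borel_measurable borel \<Longrightarrow> in_E s \<sigma> g \<longleftrightarrow> E_sqnorm s \<sigma> g < \<infinity>"
  unfolding in_E_def E_sqnorm_def
  by (simp add: integrable_iff_bounded ennreal_power E_weight_nonneg)

lemma E_norm_eq_sqrt_E_sqnorm:
  "g \<in> borel_measurable borel \<Longrightarrow> E_norm s \<sigma> g = sqrt (enn2real (E_sqnorm s \<sigma> g))"
  unfolding E_norm_def E_sqnorm_def
  by (subst integral_eq_nn_integral) (auto simp: ennreal_power E_weight_nonneg)

definition phase_const :: "real \<Rightarrow> real" where
  "phase_const \<sigma> = 2 powr \<sigma> / (4 * pi\<^sup>2) * schur_const"

lemma phase_const_pos: "0 < phase_const \<sigma>"
  by (simp add: phase_const_def schur_const_pos)

lemma E_sqnorm_ft_mult_phase_le: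
  assumes "0 \<le> \<sigma>" "\<And>x. x < 0 \<Longrightarrow> g x = 0" "\<And>x. x \<le> 0 \<Longrightarrow> v x = 0"
    and [measurable]: "g \<in> borel_measurable borel" "v \<in> borel_measurable borel"
  shows "E_sqnorm s \<sigma> (ft_mult g (ft_phase v))
    \<le> ennreal ((phase_const \<sigma>)\<^sup>2) * E_sqnorm s \<sigma> g * (E_sqnorm s \<sigma> v)\<^sup>2"
proof -
  define G where "G a = ennreal (E_weight s \<sigma> a * cmod (g a))" for a
  define V where "V b = ennreal (E_weight s \<sigma> b * cmod (v b))" for b
  have [measurable]: "G \<in> borel_measurable borel" "V \<in> borel_measurable borel"
    unfolding G_def[abs_def] V_def[abs_def] by measurable
  let ?k = "ennreal (2 powr \<sigma> / (4 * pi\<^sup>2))"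
  have "E_sqnorm s \<sigma> (ft_mult g (ft_phase v)) \<le> (\<integral>\<^sup>+\<xi>. (?k * recip_sum_trilinear G V \<xi>)\<^sup>2 \<partial>lborel)"
    unfolding E_sqnorm_def G_def[abs_def] V_def[abs_def]
    using assms by (intro nn_integral_mono power_mono weighted_norm_ft_mult_phase_le) auto
  also have "\<dots> = ?k\<^sup>2 * (\<integral>\<^sup>+\<xi>. (recip_sum_trilinear G V \<xi>)\<^sup>2 \<partial>lborel)"
    by (simp add: power_mult_distrib nn_integral_cmult)
  also have "\<dots> \<le> ?k\<^sup>2 * (ennreal (schur_const\<^sup>2) * (\<integral>\<^sup>+a. G a ^ 2 \<partial>lborel) * (\<integral>\<^sup>+b. V b ^ 2 \<partial>lborel)\<^sup>2)"
    by (intro mult_left_mono nn_integral_recip_sum_trilinear_sq_le) auto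
  also have "\<dots> = (?k\<^sup>2 * ennreal (schur_const\<^sup>2)) * (\<integral>\<^sup>+a. G a ^ 2 \<partial>lborel) * (\<integral>\<^sup>+b. V b ^ 2 \<partial>lborel)\<^sup>2"
    by (simp only: mult.assoc)
  also have "?k\<^sup>2 * ennreal (schur_const\<^sup>2) = ennreal ((phase_const \<sigma>)\<^sup>2)"
    unfolding phase_const_def power_mult_distrib by (simp add: ennreal_power flip: ennreal_mult)
  also have "(\<integral>\<^sup>+a. G a ^ 2 \<partial>lborel) = E_sqnorm s \<sigma> g"
    by (simp add: E_sqnorm_def G_def)
  also have "(\<integral>\<^sup>+b. V b ^ 2 \<partial>lborel) = E_sqnorm s \<sigma> v"
    by (simp add: E_sqnorm_def V_def)
  finally show ?thesis .
qed

section \<open>The gauge series\<close>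

lemma borel_measurable_ft_mult_pow[measurable]:
  assumes [measurable]: "v \<in> borel_measurable borel" "W \<in> borel_measurable borel"
  shows "ft_mult_pow v W k \<in> borel_measurable borel"
  by (induction k) simp_all

lemma ft_mult_pow_phase_eq_0_below:
  assumes v_supp: "\<And>x. x < \<epsilon> \<Longrightarrow> v x = 0" and "\<xi> < (2 * real k + 1) * \<epsilon>"
  shows "ft_mult_pow v (ft_phase v) k \<xi> = 0"
  using assms(2)
proof (induction k arbitrary: \<xi>)
  case 0
  then show ?case
    using v_supp by simp
next
  case (Suc k)
  then have "\<xi> < (2 * real k + 1) * \<epsilon> + 2 * \<epsilon>"
    by (simp add: algebra_simps)
  then show ?case
    using ft_mult_eq_0_below[OF Suc.IH ft_phase_eq_0_below[OF v_supp]] by simp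
qed

lemma E_sqnorm_ft_mult_pow_phase_le:
  assumes "0 < \<epsilon>" and v_supp: "\<And>x. x < \<epsilon> \<Longrightarrow> v x = 0" and "0 \<le> \<sigma>"
    and [measurable]: "v \<in> borel_measurable borel"
  shows "E_sqnorm s \<sigma> (ft_mult_pow v (ft_phase v) k)
    \<le> (ennreal ((phase_const \<sigma>)\<^sup>2) * (E_sqnorm s \<sigma> v)\<^sup>2) ^ k * E_sqnorm s \<sigma> v"
proof (induction k)
  case 0
  then show ?case
    by simp
next
  case (Suc k)
  let ?c = "ennreal ((phase_const \<sigma>)\<^sup>2)"
  let ?g = "ft_mult_pow v (ft_phase v) k"
  have "0 < (2 * real k + 1) * \<epsilon>"
    using \<open>0 < \<epsilon>\<close> by (intro mult_pos_pos) auto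
  then have "?g x = 0" if "x < 0" for x
    using ft_mult_pow_phase_eq_0_below[OF v_supp] that by simp
  moreover have "v x = 0" if "x \<le> 0" for x
    using v_supp that \<open>0 < \<epsilon>\<close> by simp
  ultimately have "E_sqnorm s \<sigma> (ft_mult ?g (ft_phase v)) \<le> ?c * E_sqnorm s \<sigma> ?g * (E_sqnorm s \<sigma> v)\<^sup>2"
    using \<open>0 \<le> \<sigma>\<close> by (intro E_sqnorm_ft_mult_phase_le) auto
  also have "\<dots> \<le> ?c * ((?c * (E_sqnorm s \<sigma> v)\<^sup>2) ^ k * E_sqnorm s \<sigma> v) * (E_sqnorm s \<sigma> v)\<^sup>2"
    by (intro mult_right_mono mult_left_mono Suc.IH) auto
  also have "\<dots> = (?c * (E_sqnorm s \<sigma> v)\<^sup>2) ^ Suc k * E_sqnorm s \<sigma> v"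
    by (simp add: mult_ac)
  finally show ?case
    by simp
qed

lemma finite_support_ft_mult_pow_phase:
  assumes "0 < \<epsilon>" and v_supp: "\<And>x. x < \<epsilon> \<Longrightarrow> v x = 0"
  shows "finite {k. ft_mult_pow v (ft_phase v) k \<xi> \<noteq> 0}"
proof (rule finite_subset)
  show "{k. ft_mult_pow v (ft_phase v) k \<xi> \<noteq> 0} \<subseteq> {..<nat \<lceil>\<xi> / \<epsilon>\<rceil>}"
  proof (rule subsetI, rule ccontr)
    fix k
    assume "k \<in> {k. ft_mult_pow v (ft_phase v) k \<xi> \<noteq> 0}" "k \<notin> {..<nat \<lceil>\<xi> / \<epsilon>\<rceil>}"
    moreover from this(2) have "\<xi> / \<epsilon> \<le> real k"
      by (simp add: not_less)
    then have "\<xi> \<le> real k * \<epsilon>"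
      using \<open>0 < \<epsilon>\<close> by (simp add: divide_le_eq)
    moreover have "0 \<le> real k * \<epsilon>"
      using \<open>0 < \<epsilon>\<close> by simp
    moreover have "(2 * real k + 1) * \<epsilon> = real k * \<epsilon> + real k * \<epsilon> + \<epsilon>"
      by (simp add: algebra_simps)
    ultimately have "\<xi> < (2 * real k + 1) * \<epsilon>"
      using \<open>0 < \<epsilon>\<close> by linarith
    with \<open>k \<in> {k. ft_mult_pow v (ft_phase v) k \<xi> \<noteq> 0}\<close> show False
      using ft_mult_pow_phase_eq_0_below[OF v_supp] by simp
  qed
qed simp

lemma ennreal_norm_suminf_le:
  fixes f :: "nat \<Rightarrow> 'a::real_normed_vector"
  assumes "finite {k. f k \<noteq> 0}"
  shows "ennreal (norm (\<Sum>k. f k)) \<le> (\<Sum>k. ennreal (norm (f k)))"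
proof -
  let ?N = "{k. f k \<noteq> 0}"
  have "ennreal (norm (\<Sum>k. f k)) = ennreal (norm (\<Sum>k\<in>?N. f k))"
    using assms by (subst suminf_finite) auto
  also have "\<dots> \<le> ennreal (\<Sum>k\<in>?N. norm (f k))"
    by (intro ennreal_leI norm_sum)
  also have "\<dots> = (\<Sum>k. ennreal (norm (f k)))"
    using assms by (subst suminf_finite[where N = ?N]) auto
  finally show ?thesis .
qed

lemma borel_measurable_suminf_finite_support:
  fixes f :: "nat \<Rightarrow> real \<Rightarrow> complex"
  assumes [measurable]: "\<And>k. f k \<in> borel_measurable borel" and fin: "\<And>\<xi>. finite {k. f k \<xi> \<noteq> 0}"
  shows "(\<lambda>\<xi>. \<Sum>k. f k \<xi>) \<in> borel_measurable borel"
proof (rule borel_measurable_LIMSEQ_metric[where f = "\<lambda>n \<xi>. \<Sum>k<n. f k \<xi>"])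
  show "(\<lambda>n. \<Sum>k<n. f k \<xi>) \<longlonglongrightarrow> (\<Sum>k. f k \<xi>)" for \<xi>
    using fin[of \<xi>] by (intro summable_LIMSEQ summable_finite) auto
qed measurable

text \<open>Minkowski's inequality for the series, via Cauchy-Schwarz with the weights \<open>r\<^sup>k\<close>.\<close>
lemma suminf_weighted_Cauchy_Schwarz:
  fixes a :: "nat \<Rightarrow> real" and x :: "nat \<Rightarrow> ennreal"
  assumes a: "\<And>k. 0 \<le> a k" and r: "0 < r"
  shows "(\<Sum>k. ennreal (a k) * x k)\<^sup>2 \<le> (\<Sum>k. ennreal (a k * r ^ k)) * (\<Sum>k. ennreal (a k / r ^ k) * x k ^ 2)"
proof -
  define f where "f k = ennreal (sqrt (a k * r ^ k))" for k
  define g where "g k = ennreal (sqrt (a k / r ^ k)) * x k" for k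
  have "f k * g k = ennreal (a k) * x k" for k
  proof -
    have "sqrt (a k * r ^ k) * sqrt (a k / r ^ k) = a k"
      using a[of k] r by (simp add: real_sqrt_mult[symmetric])
    then show ?thesis
      unfolding f_def g_def using a[of k] r by (simp add: mult.assoc[symmetric] flip: ennreal_mult)
  qed
  moreover have "f k ^ 2 = ennreal (a k * r ^ k)" for k
    unfolding f_def using a[of k] r by (simp add: ennreal_power)
  moreover have "g k ^ 2 = ennreal (a k / r ^ k) * x k ^ 2" for k
    unfolding g_def using a[of k] r by (simp add: power_mult_distrib ennreal_power)
  ultimately show ?thesis
    using Cauchy_Schwarz_nn_integral[of f "count_space UNIV" g] by (simp add: nn_integral_count_space_nat)
qed

lemma suminf_ennreal_exp:
  assumes "0 \<le> r"
  shows "(\<Sum>k. ennreal (\<bar>d\<bar> ^ k / fact k * r ^ k)) = ennreal (exp (\<bar>d\<bar> * r))"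
proof (rule suminf_ennreal_eq)
  show "0 \<le> \<bar>d\<bar> ^ k / fact k * r ^ k" for k
    using assms by simp
  show "(\<lambda>k. \<bar>d\<bar> ^ k / fact k * r ^ k) sums exp (\<bar>d\<bar> * r)"
    using exp_converges[of "\<bar>d\<bar> * r"] by (simp add: power_mult_distrib field_simps)
qed

lemma weighted_norm_exp_series_le:
  fixes g :: "nat \<Rightarrow> real \<Rightarrow> complex"
  assumes "finite {k. g k \<xi> \<noteq> 0}"
  shows "ennreal (E_weight s \<sigma> \<xi> * cmod (\<Sum>k. complex_of_real ((- \<delta>) ^ k / fact k) * g k \<xi>))
    \<le> (\<Sum>k. ennreal (\<bar>\<delta>\<bar> ^ k / fact k) * ennreal (E_weight s \<sigma> \<xi> * cmod (g k \<xi>)))"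
proof -
  let ?w = "E_weight s \<sigma> \<xi>" and ?a = "\<lambda>k. \<bar>\<delta>\<bar> ^ k / fact k"
  have "finite {k. complex_of_real ((- \<delta>) ^ k / fact k) * g k \<xi> \<noteq> 0}"
    by (rule finite_subset[OF _ assms]) auto
  then have "ennreal (cmod (\<Sum>k. complex_of_real ((- \<delta>) ^ k / fact k) * g k \<xi>))
      \<le> (\<Sum>k. ennreal (cmod (complex_of_real ((- \<delta>) ^ k / fact k) * g k \<xi>)))"
    by (rule ennreal_norm_suminf_le)
  also have "\<dots> = (\<Sum>k. ennreal (?a k * cmod (g k \<xi>)))"
    unfolding norm_mult norm_of_real by (simp add: power_abs)
  finally have norm_le: "ennreal (cmod (\<Sum>k. complex_of_real ((- \<delta>) ^ k / fact k) * g k \<xi>))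
      \<le> (\<Sum>k. ennreal (?a k * cmod (g k \<xi>)))" .
  have term_eq: "ennreal ?w * ennreal (?a k * cmod (g k \<xi>)) = ennreal (?a k) * ennreal (?w * cmod (g k \<xi>))" for k
    by (simp add: E_weight_nonneg mult_ac flip: ennreal_mult)
  have "ennreal (?w * cmod (\<Sum>k. complex_of_real ((- \<delta>) ^ k / fact k) * g k \<xi>))
      = ennreal ?w * ennreal (cmod (\<Sum>k. complex_of_real ((- \<delta>) ^ k / fact k) * g k \<xi>))"
    by (rule ennreal_mult) (simp_all add: E_weight_nonneg)
  also have "\<dots> \<le> ennreal ?w * (\<Sum>k. ennreal (?a k * cmod (g k \<xi>)))"
    by (rule mult_left_mono[OF norm_le]) simp
  also have "\<dots> = (\<Sum>k. ennreal (?a k) * ennreal (?w * cmod (g k \<xi>)))"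
    unfolding ennreal_suminf_cmult[symmetric] by (simp only: term_eq)
  finally show ?thesis .
qed

lemma E_sqnorm_exp_series_le:
  fixes g :: "nat \<Rightarrow> real \<Rightarrow> complex"
  assumes [measurable]: "\<And>k. g k \<in> borel_measurable borel" and fin: "\<And>\<xi>. finite {k. g k \<xi> \<noteq> 0}"
    and "0 < r" "0 \<le> q" and bound: "\<And>k. E_sqnorm s \<sigma> (g k) \<le> ennreal (r ^ (2 * k) * q)"
  shows "E_sqnorm s \<sigma> (\<lambda>\<xi>. \<Sum>k. complex_of_real ((- \<delta>) ^ k / fact k) * g k \<xi>)
    \<le> ennreal (exp (2 * \<bar>\<delta>\<bar> * r) * q)"
proof -
  define a where "a k = \<bar>\<delta>\<bar> ^ k / fact k" for k
  define X where "X k \<xi> = ennreal (E_weight s \<sigma> \<xi> * cmod (g k \<xi>))" for k \<xi>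
  have a_nonneg: "0 \<le> a k" for k
    by (simp add: a_def)
  have [measurable]: "(\<lambda>\<xi>. X k \<xi>) \<in> borel_measurable borel" for k
    unfolding X_def by measurable
  have pointwise: "ennreal (E_weight s \<sigma> \<xi> * cmod (\<Sum>k. complex_of_real ((- \<delta>) ^ k / fact k) * g k \<xi>))
      \<le> (\<Sum>k. ennreal (a k) * X k \<xi>)" for \<xi>
    unfolding a_def X_def by (rule weighted_norm_exp_series_le[OF fin])
  have "E_sqnorm s \<sigma> (\<lambda>\<xi>. \<Sum>k. complex_of_real ((- \<delta>) ^ k / fact k) * g k \<xi>)
      \<le> (\<integral>\<^sup>+\<xi>. (\<Sum>k. ennreal (a k * r ^ k)) * (\<Sum>k. ennreal (a k / r ^ k) * X k \<xi> ^ 2) \<partial>lborel)"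
    unfolding E_sqnorm_def
    by (intro nn_integral_mono order_trans[OF power_mono[OF pointwise]] suminf_weighted_Cauchy_Schwarz
        a_nonneg \<open>0 < r\<close>) auto
  also have "\<dots> = (\<Sum>k. ennreal (a k * r ^ k)) * (\<Sum>k. ennreal (a k / r ^ k) * E_sqnorm s \<sigma> (g k))"
    unfolding E_sqnorm_def X_def
    by (simp add: nn_integral_cmult nn_integral_suminf)
  also have "\<dots> \<le> (\<Sum>k. ennreal (a k * r ^ k)) * (\<Sum>k. ennreal (a k * r ^ k) * ennreal q)"
  proof (intro mult_left_mono suminf_le)
    fix k
    have "a k / r ^ k * (r ^ (2 * k) * q) = a k * r ^ k * q"
      using \<open>0 < r\<close> by (simp add: power_mult power2_eq_square field_simps)
    then show "ennreal (a k / r ^ k) * E_sqnorm s \<sigma> (g k) \<le> ennreal (a k * r ^ k) * ennreal q"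
      using mult_left_mono[OF bound[of k], of "ennreal (a k / r ^ k)"] \<open>0 < r\<close> \<open>0 \<le> q\<close> a_nonneg[of k]
      by (simp flip: ennreal_mult)
  qed auto
  also have "\<dots> = ennreal (exp (2 * \<bar>\<delta>\<bar> * r) * q)"
  proof -
    have exp_series: "(\<Sum>k. ennreal (a k * r ^ k)) = ennreal (exp (\<bar>\<delta>\<bar> * r))"
      unfolding a_def using \<open>0 < r\<close> by (intro suminf_ennreal_exp) simp
    have "exp (2 * \<bar>\<delta>\<bar> * r) * q = exp (\<bar>\<delta>\<bar> * r) * (exp (\<bar>\<delta>\<bar> * r) * q)"
      by (simp add: mult.assoc[symmetric] flip: exp_add)
    then show ?thesis
      using \<open>0 \<le> q\<close> by (simp only: ennreal_suminf_multc exp_series) (simp flip: ennreal_mult)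
  qed
  finally show ?thesis .
qed

lemma ft_gauge_eq_suminf:
  "ft_gauge \<delta> v = (\<lambda>\<xi>. \<Sum>k. complex_of_real ((- \<delta>) ^ k / fact k) * ft_mult_pow v (ft_phase v) k \<xi>)"
  by (simp add: fun_eq_iff ft_gauge_def ft_phase_def)

lemma E_sqnorm_ft_gauge_le:
  assumes "0 < \<epsilon>" and v_supp: "\<And>x. x < \<epsilon> \<Longrightarrow> v x = 0" and "0 \<le> \<sigma>"
    and [measurable]: "v \<in> borel_measurable borel" and Q_v: "E_sqnorm s \<sigma> v = ennreal q" and "0 \<le> q"
  shows "E_sqnorm s \<sigma> (ft_gauge \<delta> v) \<le> ennreal (exp (2 * \<bar>\<delta>\<bar> * phase_const \<sigma> * q) * q)"
proof -
  \<comment> \<open>any \<open>r > 0\<close> does for \<open>q = 0\<close>\<close>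
  define r where "r = (if q = 0 then 1 else phase_const \<sigma> * q)"
  have "0 < r"
    using \<open>0 \<le> q\<close> phase_const_pos[of \<sigma>] by (simp add: r_def)
  have "E_sqnorm s \<sigma> (ft_mult_pow v (ft_phase v) k)
      \<le> (ennreal ((phase_const \<sigma>)\<^sup>2) * (ennreal q)\<^sup>2) ^ k * ennreal q" for k
    using E_sqnorm_ft_mult_pow_phase_le[of \<epsilon> v \<sigma> s k, OF \<open>0 < \<epsilon>\<close> v_supp \<open>0 \<le> \<sigma>\<close>] Q_v by simp
  also have "(ennreal ((phase_const \<sigma>)\<^sup>2) * (ennreal q)\<^sup>2) ^ k * ennreal q
      = ennreal ((phase_const \<sigma> * q) ^ (2 * k) * q)" for k
    using \<open>0 \<le> q\<close> by (simp add: ennreal_power power_mult power_mult_distrib flip: ennreal_mult)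
  also have "(phase_const \<sigma> * q) ^ (2 * k) * q = r ^ (2 * k) * q" for k
    by (simp add: r_def)
  finally have "E_sqnorm s \<sigma> (ft_mult_pow v (ft_phase v) k) \<le> ennreal (r ^ (2 * k) * q)" for k .
  then have "E_sqnorm s \<sigma> (ft_gauge \<delta> v) \<le> ennreal (exp (2 * \<bar>\<delta>\<bar> * r) * q)"
    unfolding ft_gauge_eq_suminf
    using finite_support_ft_mult_pow_phase[OF assms(1,2)] \<open>0 < r\<close> \<open>0 \<le> q\<close>
    by (intro E_sqnorm_exp_series_le) auto
  also have "exp (2 * \<bar>\<delta>\<bar> * r) * q = exp (2 * \<bar>\<delta>\<bar> * phase_const \<sigma> * q) * q"
    by (simp add: r_def)
  finally show ?thesis .
qed

lemma E_bound_ft_gauge_supported: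
  assumes "0 < \<epsilon>" and v_supp: "\<And>x. x < \<epsilon> \<Longrightarrow> v x = 0" and "0 \<le> \<sigma>" and v_in: "in_E s \<sigma> v"
  shows "in_E s \<sigma> (ft_gauge \<delta> v)"
    and "E_norm s \<sigma> (ft_gauge \<delta> v) \<le> exp (\<bar>\<delta>\<bar> * phase_const \<sigma> * (E_norm s \<sigma> v)\<^sup>2) * E_norm s \<sigma> v"
proof -
  have [measurable]: "v \<in> borel_measurable borel"
    using v_in by (simp add: in_E_def)
  define q where "q = enn2real (E_sqnorm s \<sigma> v)"
  have "0 \<le> q"
    by (simp add: q_def)
  moreover have "E_sqnorm s \<sigma> v = ennreal q"
    using v_in by (simp add: q_def in_E_iff_E_sqnorm)
  ultimately have Q_gauge: "E_sqnorm s \<sigma> (ft_gauge \<delta> v) \<le> ennreal (exp (2 * \<bar>\<delta>\<bar> * phase_const \<sigma> * q) * q)"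
    using E_sqnorm_ft_gauge_le[OF assms(1-3)] by simp
  have [measurable]: "ft_gauge \<delta> v \<in> borel_measurable borel"
    unfolding ft_gauge_eq_suminf using finite_support_ft_mult_pow_phase[OF assms(1,2)]
    by (intro borel_measurable_suminf_finite_support) (auto elim!: finite_subset[rotated])
  show "in_E s \<sigma> (ft_gauge \<delta> v)"
    using Q_gauge by (simp add: in_E_iff_E_sqnorm le_less_trans)
  have "exp (2 * \<bar>\<delta>\<bar> * phase_const \<sigma> * q) * q = (exp (\<bar>\<delta>\<bar> * phase_const \<sigma> * q))\<^sup>2 * q"
    by (simp add: power2_eq_square exp_add[symmetric])
  then have "E_norm s \<sigma> (ft_gauge \<delta> v) \<le> sqrt ((exp (\<bar>\<delta>\<bar> * phase_const \<sigma> * q))\<^sup>2 * q)"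
    using Q_gauge \<open>0 \<le> q\<close>
    by (auto simp: E_norm_eq_sqrt_E_sqnorm intro!: real_sqrt_le_mono enn2real_leI)
  also have "\<dots> = exp (\<bar>\<delta>\<bar> * phase_const \<sigma> * (E_norm s \<sigma> v)\<^sup>2) * E_norm s \<sigma> v"
    using \<open>0 \<le> q\<close> by (simp add: E_norm_eq_sqrt_E_sqnorm q_def real_sqrt_mult)
  finally show "E_norm s \<sigma> (ft_gauge \<delta> v) \<le> exp (\<bar>\<delta>\<bar> * phase_const \<sigma> * (E_norm s \<sigma> v)\<^sup>2) * E_norm s \<sigma> v" .
qed

section \<open>Support condition almost everywhere\<close>

lemma E_sqnorm_cong_AE: "AE x in lborel. f x = g x \<Longrightarrow> E_sqnorm s \<sigma> f = E_sqnorm s \<sigma> g"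
  unfolding E_sqnorm_def by (rule nn_integral_cong_AE) (auto elim: eventually_mono)

lemma ft_mult_cong_AE:
  assumes "AE x in lborel. f x = f' x"
    and [measurable]: "f \<in> borel_measurable borel" "f' \<in> borel_measurable borel" "g \<in> borel_measurable borel"
  shows "ft_mult f g = ft_mult f' g"
proof
  fix \<xi>
  have "AE \<eta> in lborel. f \<eta> * g (\<xi> - \<eta>) = f' \<eta> * g (\<xi> - \<eta>)"
    using assms(1) by eventually_elim simp
  then have "conv f g \<xi> = conv f' g \<xi>"
    unfolding conv_def by (rule integral_cong_AE[rotated 2]) measurable
  then show "ft_mult f g \<xi> = ft_mult f' g \<xi>"
    by (simp add: ft_mult_def)
qed

lemma ft_phase_cong_AE:
  assumes vw: "AE x in lborel. v x = w x"
    and [measurable]: "v \<in> borel_measurable borel" "w \<in> borel_measurable borel"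
  shows "ft_phase v = ft_phase w"
proof
  fix t
  have "AE x in lborel. v (t + (-1) * x) = w (t + (-1) * x)"
    by (rule AE_borel_affine[OF _ _ vw]) simp_all
  then have "AE x in lborel. v x * ft_star v (t - x) = w x * ft_star w (t - x)"
    using vw by eventually_elim (simp add: ft_star_def)
  then have "conv v (ft_star v) t = conv w (ft_star w) t"
    unfolding conv_def by (rule integral_cong_AE[rotated 2]) (measurable, unfold ft_star_def, measurable)
  then show "ft_phase v t = ft_phase w t"
    by (simp add: ft_phase_def ft_antideriv_def ft_mult_def)
qed

lemma ft_gauge_cong_AE:
  assumes vw: "AE x in lborel. v x = w x"
    and v_meas[measurable]: "v \<in> borel_measurable borel" and w_meas[measurable]: "w \<in> borel_measurable borel"
    and summable: "summable (\<lambda>k. complex_of_real ((- \<delta>) ^ k / fact k) * ft_mult_pow w (ft_phase w) k \<xi>)"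
  shows "ft_gauge \<delta> v \<xi> = ft_gauge \<delta> w \<xi> + (v \<xi> - w \<xi>)"
proof -
  have pow: "ft_mult_pow v (ft_phase w) (Suc k) = ft_mult_pow w (ft_phase w) (Suc k)" for k
    by (induction k) (simp_all add: ft_mult_cong_AE[OF vw v_meas w_meas borel_measurable_ft_phase[OF w_meas]])
  have series_term: "complex_of_real ((- \<delta>) ^ k / fact k) * ft_mult_pow v (ft_phase v) k \<xi>
      = complex_of_real ((- \<delta>) ^ k / fact k) * ft_mult_pow w (ft_phase w) k \<xi>
        + (if k = 0 then v \<xi> - w \<xi> else 0)" for k
    by (cases k) (simp_all add: ft_phase_cong_AE[OF vw] pow del: ft_mult_pow.simps(2))
  have "(\<lambda>k. complex_of_real ((- \<delta>) ^ k / fact k) * ft_mult_pow w (ft_phase w) k \<xi>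
      + (if k = 0 then v \<xi> - w \<xi> else 0)) sums (ft_gauge \<delta> w \<xi> + (v \<xi> - w \<xi>))"
    using summable_sums[OF summable] sums_single[of 0 "\<lambda>_. v \<xi> - w \<xi>"]
    by (intro sums_add) (simp_all add: ft_gauge_eq_suminf)
  then have "(\<lambda>k. complex_of_real ((- \<delta>) ^ k / fact k) * ft_mult_pow v (ft_phase v) k \<xi>)
      sums (ft_gauge \<delta> w \<xi> + (v \<xi> - w \<xi>))"
    by (simp only: series_term)
  then show ?thesis
    by (simp add: ft_gauge_eq_suminf sums_iff)
qed

lemma E_bound_ft_gauge:
  assumes "0 < \<epsilon>" "0 \<le> \<sigma>" and v_in: "in_E s \<sigma> v" and v_supp: "AE \<xi> in lborel. \<xi> < \<epsilon> \<longrightarrow> v \<xi> = 0"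
  shows "in_E s \<sigma> (ft_gauge \<delta> v) \<and>
    E_norm s \<sigma> (ft_gauge \<delta> v) \<le> exp (\<bar>\<delta>\<bar> * phase_const \<sigma> * (E_norm s \<sigma> v)\<^sup>2) * E_norm s \<sigma> v"
proof -
  have [measurable]: "v \<in> borel_measurable borel"
    using v_in by (simp add: in_E_def)
  define w where "w x = (if x < \<epsilon> then 0 else v x)" for x
  have [measurable]: "w \<in> borel_measurable borel"
    unfolding w_def by measurable
  have w_supp: "\<And>x. x < \<epsilon> \<Longrightarrow> w x = 0"
    by (simp add: w_def)
  have vw: "AE x in lborel. v x = w x"
    using v_supp by eventually_elim (simp add: w_def)
  have "E_sqnorm s \<sigma> w = E_sqnorm s \<sigma> v"
    using vw by (simp add: E_sqnorm_cong_AE eq_commute)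
  then have w_in: "in_E s \<sigma> w" and N_w: "E_norm s \<sigma> w = E_norm s \<sigma> v"
    using v_in by (simp_all add: in_E_iff_E_sqnorm E_norm_eq_sqrt_E_sqnorm)
  have "summable (\<lambda>k. complex_of_real ((- \<delta>) ^ k / fact k) * ft_mult_pow w (ft_phase w) k \<xi>)" for \<xi>
    by (rule summable_finite[OF finite_support_ft_mult_pow_phase[OF assms(1) w_supp, where \<xi> = \<xi>]]) auto
  then have gauge_v: "ft_gauge \<delta> v = (\<lambda>\<xi>. ft_gauge \<delta> w \<xi> + (v \<xi> - w \<xi>))"
    by (intro ext ft_gauge_cong_AE[OF vw]) measurable
  have [measurable]: "ft_gauge \<delta> w \<in> borel_measurable borel"
    using E_bound_ft_gauge_supported(1)[OF assms(1) w_supp assms(2) w_in] by (simp add: in_E_def)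
  then have [measurable]: "ft_gauge \<delta> v \<in> borel_measurable borel"
    unfolding gauge_v by measurable
  have "AE \<xi> in lborel. ft_gauge \<delta> v \<xi> = ft_gauge \<delta> w \<xi>"
    using vw unfolding gauge_v by eventually_elim simp
  then have "E_sqnorm s \<sigma> (ft_gauge \<delta> v) = E_sqnorm s \<sigma> (ft_gauge \<delta> w)"
    by (rule E_sqnorm_cong_AE)
  then show ?thesis
    using E_bound_ft_gauge_supported[OF assms(1) w_supp assms(2) w_in, of \<delta>]
    by (simp add: in_E_iff_E_sqnorm E_norm_eq_sqrt_E_sqnorm N_w[symmetric])
qed

theorem proposition3p2:
  fixes \<epsilon>0 \<delta> \<sigma> :: real
  assumes "\<epsilon>0 > 0" and "\<sigma> > 0"
  shows "\<exists>C>0. \<forall>s v. s \<le> 0 \<longrightarrow> in_E s \<sigma> v \<longrightarrow>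
           (AE \<xi> in lborel. \<xi> < \<epsilon>0 \<longrightarrow> v \<xi> = 0) \<longrightarrow>
           in_E s \<sigma> (ft_gauge \<delta> v) \<and>
           E_norm s \<sigma> (ft_gauge \<delta> v) \<le> exp (C * (E_norm s \<sigma> v)\<^sup>2) * E_norm s \<sigma> v"
proof (intro exI[of _ "\<bar>\<delta>\<bar> * phase_const \<sigma> + 1"] conjI allI impI)
  show "0 < \<bar>\<delta>\<bar> * phase_const \<sigma> + 1"
    using phase_const_pos[of \<sigma>] by (simp add: add_nonneg_pos)
  fix s v
  assume "in_E s \<sigma> v" and "AE \<xi> in lborel. \<xi> < \<epsilon>0 \<longrightarrow> v \<xi> = 0"
  then have bound: "in_E s \<sigma> (ft_gauge \<delta> v) \<and>
      E_norm s \<sigma> (ft_gauge \<delta> v) \<le> exp (\<bar>\<delta>\<bar> * phase_const \<sigma> * (E_norm s \<sigma> v)\<^sup>2) * E_norm s \<sigma> v"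
    using E_bound_ft_gauge[OF \<open>\<epsilon>0 > 0\<close> less_imp_le[OF \<open>\<sigma> > 0\<close>]] by blast
  then show "in_E s \<sigma> (ft_gauge \<delta> v)"
    by simp
  have "exp (\<bar>\<delta>\<bar> * phase_const \<sigma> * (E_norm s \<sigma> v)\<^sup>2) \<le> exp ((\<bar>\<delta>\<bar> * phase_const \<sigma> + 1) * (E_norm s \<sigma> v)\<^sup>2)"
    by (simp add: distrib_right)
  moreover have "0 \<le> E_norm s \<sigma> v"
    by (simp add: E_norm_def)
  ultimately show "E_norm s \<sigma> (ft_gauge \<delta> v) \<le> exp ((\<bar>\<delta>\<bar> * phase_const \<sigma> + 1) * (E_norm s \<sigma> v)\<^sup>2) * E_norm s \<sigma> v"
    using bound by (meson mult_right_mono order_trans)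
qed

end
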